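(* For each $x\in X$ we have $\deg(x)=\deg(T(x))$.
   Context: Paths and cycles: a graph is $G=(V,E)$ with $V$ finite and $E\subset V\times V$. A path is a finite sequence of vertices $(u_0,\dots,u_L)$ with $(u_j,u_{j+1})\in E$; its length is $|\cdot|=L$; a cycle is a path with $u_0=u_L$. For paths where one ends where the next starts, $+$ denotes concatenation and $a\,c$ means the cycle $c$ traversed $a$ times. Construction: $G_0=(V_0,E_0)$ with $V_0=\{v_{0,0}\}$, $E_0=\{e_{0,0}\}$, $e_{0,0}=(v_{0,0},v_{0,0})$. For $n\geq1$, $G_n=(V_n,E_n)$ consists of a vertex $v_{n,0}$, the loop $e_{n,0}=(v_{n,0},v_{n,0})$, and $n$ cycles $c_{n,1},\dots,c_{n,n}$, each starting and ending at $v_{n,0}$, whose vertices other than $v_{n,0}$ are pairwise distinct (within each cycle and across cycles); $V_n$ is the set of all these vertices and $E_n$ consists of $e_{n,0}$ and the edges of the cycles. The maps $\varphi_n\colon V_{n+1}\to V_n$ and the lengths of the cycles $c_{n+1,i}$ are defined together: $\varphi_n(v_{n+1,0})=v_{n,0}$, and for each $i$ a path $P_{n,i}$ in $G_n$ from $v_{n,0}$ to $v_{n,0}$ is given; $c_{n+1,i}$ has length $|P_{n,i}|$ and $\varphi_n$ maps its $j$-th vertex to the $j$-th vertex of $P_{n,i}$ (written $\varphi_n(c_{n+1,i})=P_{n,i}$). The paths are: $P_{0,1}=10\,e_{0,0}$; for $n\geq1$: $P_{n,i}=e_{n,0}+2c_{n,i}+2c_{n,i+1}+\dots+2c_{n,n}+e_{n,0}$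 for $2\leq i\leq n$; $P_{n,n+1}=(n+2)^2\big(\sum_{i=1}^n|c_{n,i}|\big)\,e_{n,0}$; and $P_{n,1}=(1\,e_{n,0}+2c_{n,1})+(2\,e_{n,0}+2c_{n,1})+\dots+(k_n\,e_{n,0}+2c_{n,1})+e_{n,0}+2c_{n,2}+\dots+2c_{n,n}+e_{n,0}$, where $k_n=2\big(1+\sum_{i=1}^n|c_{n,i}|\big)$. Let $X=\{x\in\prod_{n\geq0}V_n:\varphi_n(x_{n+1})=x_n\ \forall n\}$ with metric $d(x,y)=2^{-\min\{i:x_i\neq y_i\}}$ ($d(x,x)=0$); $X$ is a compact zero-dimensional metric space, and $T\colon X\to X$ defined by $T(x)=y$ iff $(x_n,y_n)\in E_n$ for all $n$ is a well-defined homeomorphism. Write $x_n$ for the $n$-th coordinate of $x$. Degree: for $v\in V_n$, $\deg(v)=+\infty$ if $v=v_{n,0}$ and $\deg(v)=i$ if $v$ is a vertex of $c_{n,i}$ different from $v_{n,0}$; for $x\in X$, $\deg(x)=\min_n\deg(x_n)$. *)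

theory Defs
  imports Main "HOL-Library.Extended_Nat"
begin

text \<open>Vertices of G_n: the base vertex v_{n,0} is Center; Cyc i j is the j-th vertex
  (1 <= j < |c_{n,i}|) of the cycle c_{n,i}.\<close>
datatype vtx = Center | Cyc nat nat

text \<open>Paths are represented as lists of vertices (u_0,...,u_L); length of path = length - 1.\<close>
definition pcat :: "vtx list \<Rightarrow> vtx list \<Rightarrow> vtx list" where
  "pcat p q = p @ tl q"

primrec prep :: "nat \<Rightarrow> vtx list \<Rightarrow> vtx list" where
  "prep 0 p = [Center]"
| "prep (Suc a) p = pcat p (prep a p)"

definition pcats :: "vtx list list \<Rightarrow> vtx list" where
  "pcats ps = foldr pcat ps [Center]"

definition loop :: "vtx list" where
  "loop = [Center, Center]"

text \<open>The cycle c_{n,i}, given the length function len i = |c_{n,i}|.\<close>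
definition cyc :: "(nat \<Rightarrow> nat) \<Rightarrow> nat \<Rightarrow> vtx list" where
  "cyc len i = [Center] @ map (Cyc i) [1..<len i] @ [Center]"

definition Pgen :: "nat \<Rightarrow> (nat \<Rightarrow> nat) \<Rightarrow> nat \<Rightarrow> vtx list" where
  "Pgen n len i =
    (let S = (\<Sum>j=1..n. len j); k = 2 * (1 + S) in
     if i = n + 1 then prep ((n + 2)^2 * S) loop
     else if 2 \<le> i \<and> i \<le> n then
       pcats ([loop] @ map (\<lambda>j. prep 2 (cyc len j)) [i..<n+1] @ [loop])
     else if i = 1 then
       pcats (map (\<lambda>a. pcat (prep a loop) (prep 2 (cyc len 1))) [1..<k+1]
              @ [loop] @ map (\<lambda>j. prep 2 (cyc len j)) [2..<n+1] @ [loop])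
     else [Center])"

definition Ppath :: "nat \<Rightarrow> (nat \<Rightarrow> nat) \<Rightarrow> nat \<Rightarrow> vtx list" where
  "Ppath n len i = (if n = 0 then prep 10 loop else Pgen n len i)"

primrec cl :: "nat \<Rightarrow> nat \<Rightarrow> nat" where
  "cl 0 = (\<lambda>i. 0)"
| "cl (Suc n) = (\<lambda>i. if 1 \<le> i \<and> i \<le> Suc n then length (Ppath n (cl n) i) - 1 else 0)"

definition P :: "nat \<Rightarrow> nat \<Rightarrow> vtx list" where
  "P n i = Ppath n (cl n) i"

definition V :: "nat \<Rightarrow> vtx set" where
  "V n = {Center} \<union> {Cyc i j | i j. 1 \<le> i \<and> i \<le> n \<and> 1 \<le> j \<and> j < cl n i}"

definition E :: "nat \<Rightarrow> (vtx \<times> vtx) set" where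
  "E n = {(Center, Center)} \<union>
     {(cyc (cl n) i ! j, cyc (cl n) i ! (j + 1)) | i j. 1 \<le> i \<and> i \<le> n \<and> j < cl n i}"

definition phi :: "nat \<Rightarrow> vtx \<Rightarrow> vtx" where
  "phi n v = (case v of Center \<Rightarrow> Center | Cyc i j \<Rightarrow> P n i ! j)"

definition X :: "(nat \<Rightarrow> vtx) set" where
  "X = {x. (\<forall>n. x n \<in> V n) \<and> (\<forall>n. phi n (x (Suc n)) = x n)}"

definition T :: "(nat \<Rightarrow> vtx) \<Rightarrow> (nat \<Rightarrow> vtx)" where
  "T x = (THE y. y \<in> X \<and> (\<forall>n. (x n, y n) \<in> E n))"

definition degv :: "vtx \<Rightarrow> enat" where
  "degv v = (case v of Center \<Rightarrow> \<infinity> | Cyc i j \<Rightarrow> enat i)"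

definition deg :: "(nat \<Rightarrow> vtx) \<Rightarrow> enat" where
  "deg x = (INF n. degv (x n))"

end

theory Submission
  imports Defs
begin

text \<open>The map \<open>phi n\<close> wraps the cycle c_{n+1,k} around the path \<open>P n k\<close>, a closed walk in
  G_n that only visits cycles c_{n,i} with i \<ge> k and that starts and ends with the loop at the
  base vertex. Hence if x_n is a vertex of c_{n,k} other than the base vertex, then x_{n+1} lies
  on some c_{n+1,k'} with k' \<le> k, at distance at least two from the base vertex on both sides,
  so its successor and its predecessor stay on c_{n+1,k'}. Applied to x and to T x, this gives
  both inequalities between deg x and deg (T x). The same padding makes T well defined: \<open>phi n\<close>
  sends all out-neighbours of a vertex of G_{n+1} to a single vertex.\<close>

definition closed_walk :: "nat \<Rightarrow> vtx list \<Rightarrow> bool" where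
  "closed_walk n p \<longleftrightarrow>
     p \<noteq> [] \<and> hd p = Center \<and> last p = Center \<and> successively (\<lambda>u v. (u, v) \<in> E n) p"

lemma closed_walk_pcat:
  assumes p: "closed_walk n p" and q: "closed_walk n q"
  shows "closed_walk n (pcat p q)"
proof -
  have q_eq: "q = Center # tl q" using q by (cases q) (auto simp: closed_walk_def)
  then have "successively (\<lambda>u v. (u, v) \<in> E n) (Center # tl q)"
    using q by (simp add: closed_walk_def)
  moreover have "last (p @ tl q) = Center"
    using p q q_eq by (cases "tl q = []") (auto simp: closed_walk_def, metis last_ConsR)
  ultimately show ?thesis
    using p by (auto simp: closed_walk_def pcat_def successively_append_iff successively_Cons)
qed

lemma closed_walk_Center: "closed_walk n [Center]"
  by (simp add: closed_walk_def)

lemma closed_walk_prep: "closed_walk n p \<Longrightarrow> closed_walk n (prep a p)"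
  by (induction a) (auto simp: closed_walk_Center closed_walk_pcat)

lemma closed_walk_pcats: "\<forall>q\<in>set qs. closed_walk n q \<Longrightarrow> closed_walk n (pcats qs)"
  by (induction qs) (auto simp: pcats_def closed_walk_Center closed_walk_pcat)

lemma closed_walk_loop: "closed_walk n loop"
  by (simp add: closed_walk_def loop_def E_def)

lemma length_cyc: "length (cyc L i) = Suc (max 1 (L i))"
  by (simp add: cyc_def)

lemma closed_walk_cyc:
  assumes "1 \<le> i" "i \<le> n"
  shows "closed_walk n (cyc (cl n) i)"
proof -
  have "(cyc (cl n) i ! t, cyc (cl n) i ! Suc t) \<in> E n" if "Suc t < length (cyc (cl n) i)" for t
  proof (cases "cl n i = 0")
    case True
    with that show ?thesis by (simp add: cyc_def E_def)
  next
    case False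
    with that have "t < cl n i" by (simp add: length_cyc)
    with assms show ?thesis unfolding E_def by auto
  qed
  then show ?thesis by (auto simp: closed_walk_def successively_conv_nth cyc_def)
qed

lemma pcat_assoc: "q \<noteq> [] \<Longrightarrow> pcat (pcat p q) r = pcat p (pcat q r)"
  by (simp add: pcat_def)

lemma pcats_snoc:
  assumes "\<forall>q\<in>set qs. closed_walk n q" "closed_walk n r"
  shows "pcats (qs @ [r]) = pcat (pcats qs) r"
  using assms
proof (induction qs)
  case Nil
  then have "r = Center # tl r" by (cases r) (auto simp: closed_walk_def)
  then show ?case by (simp add: pcats_def pcat_def)
next
  case (Cons q qs)
  have "pcats qs \<noteq> []"
    using closed_walk_pcats[of qs n] Cons.prems by (simp add: closed_walk_def)
  with Cons show ?case by (simp add: pcats_def pcat_assoc)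
qed

lemma set_pcat: "set (pcat p q) \<subseteq> set p \<union> set q"
  by (cases q) (auto simp: pcat_def)

lemma set_prep: "set (prep a p) \<subseteq> insert Center (set p)"
  by (induction a) (use set_pcat in fastforce)+

lemma set_pcats: "set (pcats qs) \<subseteq> insert Center (\<Union>q\<in>set qs. set q)"
  by (induction qs) (use set_pcat in \<open>fastforce simp: pcats_def\<close>)+

lemma set_prep_loop: "set (prep a loop) \<subseteq> {Center}"
  using set_prep[of a loop] by (simp add: loop_def)

definition high_walk :: "nat \<Rightarrow> nat \<Rightarrow> vtx list \<Rightarrow> bool" where
  "high_walk n k p \<longleftrightarrow> closed_walk n p \<and> (\<forall>v\<in>set p. enat k \<le> degv v)"

lemma high_walk_pcat: "high_walk n k p \<Longrightarrow> high_walk n k q \<Longrightarrow> high_walk n k (pcat p q)"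
  using set_pcat[of p q] by (auto simp: high_walk_def closed_walk_pcat)

lemma high_walk_prep: "high_walk n k p \<Longrightarrow> high_walk n k (prep a p)"
  using set_prep[of a p] by (auto simp: high_walk_def closed_walk_prep degv_def)

lemma high_walk_pcats: "\<forall>q\<in>set qs. high_walk n k q \<Longrightarrow> high_walk n k (pcats qs)"
  using set_pcats[of qs] by (auto simp: high_walk_def closed_walk_pcats degv_def)

lemma high_walk_loop: "high_walk n k loop"
  using closed_walk_loop by (simp add: high_walk_def loop_def degv_def)

lemma high_walk_cyc: "1 \<le> i \<Longrightarrow> k \<le> i \<Longrightarrow> i \<le> n \<Longrightarrow> high_walk n k (cyc (cl n) i)"
  using closed_walk_cyc by (auto simp: high_walk_def cyc_def degv_def)

lemma pcats_loop_wrap: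
  assumes "\<forall>q\<in>set qs. closed_walk n q"
  shows "pcats (loop # qs @ [loop]) = pcat loop (pcat (pcats qs) loop)"
  using pcats_snoc[OF assms closed_walk_loop] by (simp add: pcats_def)

lemma P_wrapped:
  assumes "1 \<le> k" "k \<le> n"
  obtains qs where "P n k = pcats (loop # qs @ [loop])" "\<forall>q\<in>set qs. high_walk n k q"
proof -
  define cs where "cs i = map (\<lambda>j. prep 2 (cyc (cl n) j)) [i..<n+1]" for i
  have cs: "\<forall>q\<in>set (cs i). high_walk n k q" if "1 \<le> i" "k \<le> i" for i
    using that by (auto simp: cs_def intro!: high_walk_prep high_walk_cyc)
  show thesis
  proof (cases "k = 1")
    case True
    define S where "S = (\<Sum>j=1..n. cl n j)"
    define r where "r = prep 2 (cyc (cl n) 1)"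
    define A where "A = map (\<lambda>a. pcat (prep a loop) r) [2..<2 * (1 + S) + 1]"
    have r: "high_walk n 1 r" using assms by (simp add: r_def high_walk_prep high_walk_cyc)
    have "prep 1 loop = loop" by (simp add: pcat_def loop_def)
    then have "map (\<lambda>a. pcat (prep a loop) r) [1..<2 * (1 + S) + 1] = pcat loop r # A"
      by (subst upt_conv_Cons) (simp_all add: A_def numeral_2_eq_2 del: upt_Suc)
    moreover have "P n k = pcats (map (\<lambda>a. pcat (prep a loop) r) [1..<2 * (1 + S) + 1]
        @ [loop] @ cs 2 @ [loop])"
      using assms True
      by (simp add: P_def Ppath_def Pgen_def Let_def S_def cs_def r_def del: upt_Suc)
    ultimately have "P n k = pcats (loop # (r # A @ [loop] @ cs 2) @ [loop])"
      using r by (simp add: pcats_def pcat_assoc high_walk_def closed_walk_def)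
    moreover have "\<forall>q\<in>set A. high_walk n 1 q"
      using r
      by (auto simp: A_def simp del: upt_Suc intro!: high_walk_pcat high_walk_prep high_walk_loop)
    ultimately show thesis
      using that[of "r # A @ [loop] @ cs 2"] True r cs[of 2] high_walk_loop by auto
  next
    case False
    then have "P n k = pcats (loop # cs k @ [loop])"
      using assms by (simp add: P_def Ppath_def Pgen_def Let_def cs_def)
    then show thesis using that cs assms by blast
  qed
qed

lemma P_cases:
  assumes "1 \<le> k" "k \<le> Suc n"
  obtains (all_Center) a where "P n k = prep a loop"
  | (padded) W where "P n k = pcat loop (pcat W loop)" "high_walk n k W"
proof (cases "n = 0 \<or> k = Suc n")
  case True
  then have "P n k = prep (if n = 0 then 10 else (n + 2)^2 * (\<Sum>j=1..n. cl n j)) loop"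
    by (auto simp: P_def Ppath_def Pgen_def Let_def)
  then show thesis by (rule all_Center)
next
  case False
  then obtain qs where "P n k = pcats (loop # qs @ [loop])" "\<forall>q\<in>set qs. high_walk n k q"
    using P_wrapped assms by (metis Suc_leI le_neq_implies_less not_less_eq_eq)
  then show thesis
    using padded pcats_loop_wrap[of qs n] high_walk_pcats[of qs n k] by (simp add: high_walk_def)
qed

lemma nth_padded_walk:
  assumes W: "closed_walk n W" and j: "j < Suc (Suc (length W))"
    and not_Center: "(Center # W @ [Center]) ! j \<noteq> Center"
  shows "2 \<le> j \<and> j < length W"
proof -
  obtain i where i: "j = Suc i" using not_Center by (cases j) auto
  have ends: "W ! 0 = Center" "W ! (length W - 1) = Center" "0 < length W"
    using W by (auto simp: closed_walk_def hd_conv_nth last_conv_nth)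
  have "(W @ [Center]) ! i \<noteq> Center" using not_Center i by simp
  then have "i \<noteq> 0 \<and> i \<noteq> length W - 1 \<and> i \<noteq> length W"
    using ends by (cases "i = 0") (auto simp: nth_append)
  then show ?thesis using i j by linarith
qed

lemma pcat_loop_padded:
  assumes "closed_walk n W"
  shows "pcat loop (pcat W loop) = Center # W @ [Center]"
  using assms by (cases W) (auto simp: closed_walk_def pcat_def loop_def)

lemma high_walk_P:
  assumes "1 \<le> k" "k \<le> Suc n"
  shows "high_walk n k (P n k)"
  using assms
proof (cases rule: P_cases)
  case (all_Center a)
  then show ?thesis by (simp add: high_walk_prep high_walk_loop)
next
  case (padded W)
  then show ?thesis by (simp add: high_walk_pcat high_walk_loop)
qed

lemma nth_P_interior:
  assumes "1 \<le> k" "k \<le> Suc n" "j < length (P n k)" "P n k ! j \<noteq> Center"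
  shows "2 \<le> j \<and> j + 2 < length (P n k)"
  using assms(1,2)
proof (cases rule: P_cases)
  case (all_Center a)
  then have "P n k ! j \<in> {Center}"
    using assms(3) nth_mem set_prep_loop[of a] by (metis subsetD)
  then show ?thesis using assms(4) by simp
next
  case (padded W)
  then have "P n k = Center # W @ [Center]"
    using pcat_loop_padded[of n W] by (simp add: high_walk_def)
  then show ?thesis
    using assms(3,4) nth_padded_walk[of n W j] padded(2) by (simp add: high_walk_def)
qed

lemma nth_cyc:
  assumes "t \<le> L i"
  shows "cyc L i ! t = (if t = 0 \<or> t = L i then Center else Cyc i t)"
proof (cases t)
  case (Suc s)
  then have "cyc L i ! t = (map (Cyc i) [1..<L i] @ [Center]) ! s" by (simp add: cyc_def)
  then show ?thesis using assms Suc by (auto simp: nth_append)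
qed (simp add: cyc_def)

definition cyc_vertex :: "nat \<Rightarrow> nat \<Rightarrow> nat \<Rightarrow> vtx" where
  "cyc_vertex n i t = (if t = 0 \<or> t = cl n i then Center else Cyc i t)"

lemma mem_E_iff: "(u, v) \<in> E n \<longleftrightarrow> (u = Center \<and> v = Center) \<or>
   (\<exists>i t. 1 \<le> i \<and> i \<le> n \<and> t < cl n i \<and>
      u = cyc_vertex n i t \<and> v = cyc_vertex n i (Suc t))" (is "_ \<longleftrightarrow> ?edge")
proof -
  have nth_eq: "cyc (cl n) i ! t = cyc_vertex n i t"
    "cyc (cl n) i ! Suc t = cyc_vertex n i (Suc t)" if "t < cl n i" for i t
    using that by (simp_all add: nth_cyc cyc_vertex_def)
  show ?thesis
  proof
    assume "(u, v) \<in> E n"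
    then show ?edge
      unfolding E_def using nth_eq by fastforce
  next
    assume ?edge
    then show "(u, v) \<in> E n"
    proof (elim disjE exE conjE)
      fix i t assume "1 \<le> i" "i \<le> n" "t < cl n i"
        "u = cyc_vertex n i t" "v = cyc_vertex n i (Suc t)"
      then show ?thesis unfolding E_def using nth_eq[of t i] by auto
    qed (simp add: E_def)
  qed
qed

definition next_vtx :: "nat \<Rightarrow> vtx \<Rightarrow> vtx" where
  "next_vtx n v = (case v of Center \<Rightarrow> Center
     | Cyc i j \<Rightarrow> if Suc j = cl n i then Center else Cyc i (Suc j))"

lemma E_from_Cyc: "(Cyc i j, v) \<in> E n \<Longrightarrow> v = next_vtx n (Cyc i j)"
  unfolding mem_E_iff by (auto simp: cyc_vertex_def next_vtx_def split: if_splits)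

lemma E_to_Cyc: "(u, Cyc i j) \<in> E n \<Longrightarrow> u = (if j = 1 then Center else Cyc i (j - 1))"
  unfolding mem_E_iff by (auto simp: cyc_vertex_def split: if_splits)

lemma E_target_in_V: "(u, v) \<in> E n \<Longrightarrow> v \<in> V n"
  unfolding mem_E_iff V_def cyc_vertex_def by (auto split: if_splits)

lemma E_next_vtx: "u \<in> V n \<Longrightarrow> (u, next_vtx n u) \<in> E n"
  unfolding V_def
proof (elim UnE)
  assume "u \<in> {Cyc i j |i j. 1 \<le> i \<and> i \<le> n \<and> 1 \<le> j \<and> j < cl n i}"
  then obtain i j where u: "u = Cyc i j" "1 \<le> i" "i \<le> n" "1 \<le> j" "j < cl n i" by blast
  then show ?thesis unfolding mem_E_iff
    by (intro disjI2 exI[of _ i] exI[of _ j]) (auto simp: cyc_vertex_def next_vtx_def)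
qed (simp add: next_vtx_def E_def)

lemma cl_Suc_eq: "1 \<le> i \<Longrightarrow> i \<le> Suc n \<Longrightarrow> cl (Suc n) i = length (P n i) - 1"
  by (simp add: P_def)

lemma phi_cyc_vertex:
  assumes "1 \<le> i" "i \<le> Suc n" "t \<le> cl (Suc n) i"
  shows "phi n (cyc_vertex (Suc n) i t) = P n i ! t"
proof -
  have "P n i ! 0 = Center" "P n i ! (length (P n i) - 1) = Center"
    using high_walk_P[OF assms(1,2)]
    by (auto simp: high_walk_def closed_walk_def hd_conv_nth last_conv_nth)
  then show ?thesis
    using assms cl_Suc_eq[OF assms(1,2)] by (auto simp: cyc_vertex_def phi_def)
qed

lemma phi_E: "(u, v) \<in> E (Suc n) \<Longrightarrow> (phi n u, phi n v) \<in> E n"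
proof (unfold mem_E_iff[of u v], elim disjE exE conjE)
  assume "u = Center" "v = Center"
  then show ?thesis by (simp add: phi_def E_def)
next
  fix i t
  assume a: "1 \<le> i" "i \<le> Suc n" "t < cl (Suc n) i"
    "u = cyc_vertex (Suc n) i t" "v = cyc_vertex (Suc n) i (Suc t)"
  have "Suc t < length (P n i)" using a(3) cl_Suc_eq[OF a(1,2)] by simp
  then show ?thesis
    using a phi_cyc_vertex high_walk_P[OF a(1,2)]
    by (simp add: high_walk_def closed_walk_def successively_conv_nth)
qed

text \<open>The only branching vertex is \<open>Center\<close>, and its out-neighbours \<open>Cyc i 1\<close> are mapped to
  \<open>P n i ! 1 = Center\<close>.\<close>
lemma phi_E_target: "(u, v) \<in> E (Suc n) \<Longrightarrow> phi n v = phi n (next_vtx (Suc n) u)"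
proof (cases u)
  case Center
  assume e: "(u, v) \<in> E (Suc n)"
  show ?thesis
  proof (cases v)
    case (Cyc k j)
    from e[unfolded mem_E_iff] Cyc obtain i t where a: "1 \<le> i" "i \<le> Suc n" "t < cl (Suc n) i"
      "u = cyc_vertex (Suc n) i t" "v = cyc_vertex (Suc n) i (Suc t)" by auto
    have "t = 0"
      using a(3-5) Cyc Center by (auto simp: cyc_vertex_def simp del: cl.simps split: if_splits)
    then have "phi n v = P n i ! 1" using a phi_cyc_vertex by simp
    also have "\<dots> = Center"
    proof (rule ccontr)
      assume "P n i ! 1 \<noteq> Center"
      moreover have "1 < length (P n i)"
        using a(3) \<open>t = 0\<close> cl_Suc_eq[OF a(1,2)] by (simp del: cl.simps)
      ultimately show False using nth_P_interior[OF a(1,2)] by fastforce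
    qed
    finally show ?thesis using Center by (simp add: next_vtx_def phi_def)
  qed (simp add: Center next_vtx_def phi_def)
next
  case (Cyc k j)
  assume "(u, v) \<in> E (Suc n)"
  then show ?thesis using E_from_Cyc Cyc by simp
qed

lemma T_welldefined:
  assumes x: "x \<in> X"
  shows "T x \<in> X" "(x n, T x n) \<in> E n"
proof -
  define y where "y n = phi n (next_vtx (Suc n) (x (Suc n)))" for n
  have xV: "x n \<in> V n" and xphi: "phi n (x (Suc n)) = x n" for n
    using x by (auto simp: X_def)
  have xy: "(x n, y n) \<in> E n" for n
    using phi_E[OF E_next_vtx[OF xV[of "Suc n"]]] xphi[of n] by (simp add: y_def)
  have yX: "y \<in> X" unfolding X_def
  proof (intro CollectI conjI allI)
    fix n
    show "y n \<in> V n" using E_target_in_V[OF xy] .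
    show "phi n (y (Suc n)) = y n" using phi_E_target[OF xy[of "Suc n"]] by (simp add: y_def)
  qed
  have unique: "z = y" if "z \<in> X" "\<forall>n. (x n, z n) \<in> E n" for z
  proof
    fix n
    have "z n = phi n (z (Suc n))" using that by (simp add: X_def)
    also have "\<dots> = y n" using phi_E_target that(2) by (simp add: y_def)
    finally show "z n = y n" .
  qed
  have "T x = y" unfolding T_def
    by (rule the_equality) (use yX xy unique in blast)+
  then show "T x \<in> X" "(x n, T x n) \<in> E n" using yX xy by auto
qed

lemma X_Suc_Cyc:
  assumes x: "x \<in> X" and xn: "x n = Cyc k j"
  obtains k' j' where "x (Suc n) = Cyc k' j'" "k' \<le> k" "2 \<le> j'" "j' + 1 < cl (Suc n) k'"
proof -
  have xV: "x (Suc n) \<in> V (Suc n)" and xphi: "phi n (x (Suc n)) = x n"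
    using x by (auto simp: X_def)
  then obtain k' j' where Cyc: "x (Suc n) = Cyc k' j'"
    using xn by (cases "x (Suc n)") (auto simp: phi_def)
  from xV xphi have k': "1 \<le> k'" "k' \<le> Suc n" "j' < cl (Suc n) k'"
    and P_j': "P n k' ! j' = Cyc k j" using Cyc xn by (auto simp: V_def phi_def simp del: cl.simps)
  have j': "j' < length (P n k')" using k' cl_Suc_eq[OF k'(1,2)] by linarith
  have "enat k' \<le> degv (Cyc k j)"
    using high_walk_P[OF k'(1,2)] nth_mem[OF j'] P_j' by (metis high_walk_def)
  moreover have "2 \<le> j' \<and> j' + 2 < length (P n k')"
    using nth_P_interior[OF k'(1,2) j'] P_j' by simp
  moreover have "j' + 1 < cl (Suc n) k'"
    using calculation(2) cl_Suc_eq[OF k'(1,2)] by linarith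
  ultimately show thesis using that Cyc by (simp add: degv_def)
qed

lemma deg_le_degv: "deg x \<le> degv (x n)"
  unfolding deg_def by (rule INF_lower) simp

lemma deg_eq_if_edges:
  assumes x: "x \<in> X" and y: "y \<in> X" and xy: "\<And>n. (x n, y n) \<in> E n"
  shows "deg x = deg y"
proof (rule antisym)
  have "deg x \<le> degv (y n)" for n
  proof (cases "y n")
    case (Cyc k j)
    then obtain k' j' where k'j': "y (Suc n) = Cyc k' j'" "k' \<le> k" "2 \<le> j'"
      using X_Suc_Cyc[OF y] by metis
    then have "x (Suc n) = Cyc k' (j' - 1)" using E_to_Cyc xy[of "Suc n"] by fastforce
    then have "deg x \<le> enat k'" using deg_le_degv[of x "Suc n"] by (simp add: degv_def)
    then show ?thesis using k'j'(2) Cyc by (simp add: degv_def order_trans)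
  qed (simp add: degv_def)
  then show "deg x \<le> deg y" unfolding deg_def[of y] by (rule INF_greatest)
next
  have "deg y \<le> degv (x n)" for n
  proof (cases "x n")
    case (Cyc k j)
    then obtain k' j' where k'j': "x (Suc n) = Cyc k' j'" "k' \<le> k" "j' + 1 < cl (Suc n) k'"
      using X_Suc_Cyc[OF x] by metis
    then have "y (Suc n) = Cyc k' (Suc j')"
      using E_from_Cyc[of k' j' "y (Suc n)" "Suc n"] xy[of "Suc n"]
      by (simp add: next_vtx_def del: cl.simps)
    then have "deg y \<le> enat k'" using deg_le_degv[of y "Suc n"] by (simp add: degv_def)
    then show ?thesis using k'j'(2) Cyc by (simp add: degv_def order_trans)
  qed (simp add: degv_def)
  then show "deg y \<le> deg x" unfolding deg_def[of x] by (rule INF_greatest)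
qed

theorem lemma3p8:
  assumes "x \<in> X"
  shows "deg x = deg (T x)"
  using deg_eq_if_edges[OF assms T_welldefined[OF assms]] .

end
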